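(* Let $\Delta\subseteq\{1,\dots,K\}$ and let $A=P_\Delta U^*UP_\Delta$ (as an operator on the range of $P_\Delta$). Suppose there are constants $0\le\alpha,\theta<1$ such that (a) $\|P_\Delta U^*UP_\Delta-P_\Delta\|\le\alpha$, and (b) $\|P_\Delta^\perp W^{-1}U^*UP_\Delta A^{-1}WP_\Delta\,\mathrm{sign}(x)\|_\infty\le\theta$. If $\hat x$ is a minimizer of $\min_{z\in\mathbb C^K}\|z\|_{1,w}$ subject to $\|UP_Kz-y\|\le\eta$, and $s=\sum_{i\in\Delta}(w_i)^2$, then $$\|\hat x-x\|\le2C_3\left(1+\frac{C_3+1}{1-\theta}\sqrt s\right)\eta+\frac{C_3+1}{1-\theta}\left(2\|P_\Delta^\perp x\|_{1,w}+\|x-\bar x\|_{1,w}\right),$$ where $\bar x\in\ell^1_w(\mathbb N)$ is any feasible point of that problem and $C_3=\frac{\sqrt{1+\alpha}}{1-\alpha}$.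
   Context: Setting: $D\subseteq\mathbb R^d$ a domain, $\nu\ge0$ integrable on $D$ with $\int_D\nu=1$, and $\{\phi_i\}_{i\in\mathbb N}\subseteq L^2_\nu(D)\cap L^\infty(D)$ orthonormal in $L^2_\nu(D)$. $T=\{t_n\}_{n=1}^N\subseteq\overline D$ with Voronoi cells $V_n=\{t\in D:|t-t_n|\le|t-t_m|\ \forall m\ne n\}$ and quadrature weights $\tau_n=\int_{V_n}\nu(t)\,dt$ (so $\sum_n\tau_n=1$). Positive weights $w_i\ge\|\phi_i\|_{L^\infty}$; $W=\mathrm{diag}(w_1,w_2,\dots)$; $\|z\|_{1,w}=\sum_iw_i|z_i|$. $U$ is the $N\times\infty$ matrix $U_{n,i}=\sqrt{\tau_n}\phi_i(t_n)$. The target is $f=\sum_ix_i\phi_i$ with $x\in\ell^1_w(\mathbb N)$; data $y=\{\sqrt{\tau_n}(f(t_n)+e_n)\}_{n=1}^N$ with $|e_n|\le\eta$. $P_\Delta$ is the coordinate projection onto $\Delta$, $P_\Delta^\perp=I-P_\Delta$, $P_K=P_{\{1,\dots,K\}}$; $\mathbb C^K$ is identified with sequences supported in $\{1,\dots,K\}$. $\|\cdot\|$ is the $\ell^2$ norm/operator norm, $\|\cdot\|_\infty$ the $\ell^\infty$ norm; $\mathrm{sign}$ is the entrywise complex sign with $\mathrm{sign}(0)=0$. Feasible means $\|UP_K\bar x-y\|\le\eta$. *)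

theory Defs
  imports "HOL-Analysis.Analysis"
begin

text \<open>Indices are 0-based: the paper's index i in {1,2,...} corresponds to i-1 here,
  so P_K is the projection onto {..<K} and the sample points are t 0, ..., t (N-1).\<close>

definition voronoi :: "'a::euclidean_space set \<Rightarrow> (nat \<Rightarrow> 'a) \<Rightarrow> nat \<Rightarrow> nat \<Rightarrow> 'a set" where
  "voronoi D t N n = {s \<in> D. \<forall>m<N. m \<noteq> n \<longrightarrow> norm (s - t n) \<le> norm (s - t m)}"

definition qweight :: "'a::euclidean_space set \<Rightarrow> ('a \<Rightarrow> real) \<Rightarrow> (nat \<Rightarrow> 'a) \<Rightarrow> nat \<Rightarrow> nat \<Rightarrow> real" where
  "qweight D \<nu> t N n = integral (voronoi D t N n) \<nu>"

definition Umat :: "(nat \<Rightarrow> real) \<Rightarrow> (nat \<Rightarrow> 'a \<Rightarrow> complex) \<Rightarrow> (nat \<Rightarrow> 'a) \<Rightarrow> nat \<Rightarrow> nat \<Rightarrow> complex" where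
  "Umat \<tau> \<phi> t n i = complex_of_real (sqrt (\<tau> n)) * \<phi> i (t n)"

definition UPK :: "(nat \<Rightarrow> nat \<Rightarrow> complex) \<Rightarrow> nat \<Rightarrow> (nat \<Rightarrow> complex) \<Rightarrow> nat \<Rightarrow> complex" where
  "UPK U K z n = (\<Sum>i<K. U n i * z i)"

definition vnorm :: "nat \<Rightarrow> (nat \<Rightarrow> complex) \<Rightarrow> real" where
  "vnorm N v = sqrt (\<Sum>n<N. (cmod (v n))\<^sup>2)"

definition l2norm :: "(nat \<Rightarrow> complex) \<Rightarrow> real" where
  "l2norm z = sqrt (\<Sum>i. (cmod (z i))\<^sup>2)"

definition wnorm :: "(nat \<Rightarrow> real) \<Rightarrow> (nat \<Rightarrow> complex) \<Rightarrow> real" where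
  "wnorm w z = (\<Sum>i. w i * cmod (z i))"

definition in_l1w :: "(nat \<Rightarrow> real) \<Rightarrow> (nat \<Rightarrow> complex) \<Rightarrow> bool" where
  "in_l1w w z \<longleftrightarrow> summable (\<lambda>i. w i * cmod (z i))"

definition UstarU_PD :: "(nat \<Rightarrow> nat \<Rightarrow> complex) \<Rightarrow> nat \<Rightarrow> nat set \<Rightarrow> (nat \<Rightarrow> complex) \<Rightarrow> nat \<Rightarrow> complex" where
  "UstarU_PD U N \<Delta> v i = (\<Sum>n<N. cnj (U n i) * (\<Sum>j\<in>\<Delta>. U n j * v j))"

definition Aop :: "(nat \<Rightarrow> nat \<Rightarrow> complex) \<Rightarrow> nat \<Rightarrow> nat set \<Rightarrow> (nat \<Rightarrow> complex) \<Rightarrow> nat \<Rightarrow> complex" where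
  "Aop U N \<Delta> v i = (if i \<in> \<Delta> then UstarU_PD U N \<Delta> v i else 0)"

definition Ainv :: "(nat \<Rightarrow> nat \<Rightarrow> complex) \<Rightarrow> nat \<Rightarrow> nat set \<Rightarrow> (nat \<Rightarrow> complex) \<Rightarrow> nat \<Rightarrow> complex" where
  "Ainv U N \<Delta> u = (THE v. (\<forall>i. i \<notin> \<Delta> \<longrightarrow> v i = 0) \<and> (\<forall>i\<in>\<Delta>. Aop U N \<Delta> v i = u i))"

end

theory Submission
  imports Defs
begin

text \<open>
  Let h = xhat - x. Feasibility of xhat and the noise bound place U h in a ball of radius
  2 eta (the tube constraint), and minimality of xhat against the feasible point xbar bounds
  the off-support part T = |P_Delta^perp h|_{1,w} by 2 |P_Delta^perp x|_{1,w} + |x - xbar|_{1,w}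
  - Re <W sign x, h>_Delta (the cone constraint). The dual certificate
  xi = U^* U P_Delta A^{-1} W sign x equals W sign x on Delta and is at most theta w off Delta by (b);
  since it lies in the range of U^*, the pairing <xi, h> is a pairing with U h and hence of order
  eta. This yields (1 - theta) T <= 2 |P_Delta^perp x|_{1,w} + |x - xbar|_{1,w} + 2 C_3 sqrt s eta.
  Condition (a) makes U P_Delta a near-isometry, so |P_Delta h| <= C_3 (2 eta + T), and the weights
  are at least 1 (by orthonormality), so the l2 norm of the tail is at most T.
  For the sampling matrix, each column has l2 norm at most w_i because the Voronoi weights are
  nonnegative and sum to at most 1.
\<close>

definition l2_on :: "nat set \<Rightarrow> (nat \<Rightarrow> complex) \<Rightarrow> real" where
  "l2_on A u = L2_set (\<lambda>i. cmod (u i)) A"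

definition UPD :: "(nat \<Rightarrow> nat \<Rightarrow> complex) \<Rightarrow> nat set \<Rightarrow> (nat \<Rightarrow> complex) \<Rightarrow> nat \<Rightarrow> complex" where
  "UPD U \<Delta> v n = (\<Sum>j\<in>\<Delta>. U n j * v j)"

abbreviation proj_compl :: "nat set \<Rightarrow> (nat \<Rightarrow> complex) \<Rightarrow> nat \<Rightarrow> complex" where
  "proj_compl \<Delta> z \<equiv> (\<lambda>i. if i \<in> \<Delta> then 0 else z i)"

lemma vnorm_eq_l2_on: "vnorm N v = l2_on {..<N} v"
  by (simp add: vnorm_def l2_on_def L2_set_def)

lemma l2_on_nonneg: "0 \<le> l2_on A u"
  by (simp add: l2_on_def L2_set_nonneg)

lemma vnorm_nonneg: "0 \<le> vnorm N v"
  by (simp add: vnorm_eq_l2_on l2_on_nonneg)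

lemma l2_on_cong: "(\<And>i. i \<in> A \<Longrightarrow> a i = b i) \<Longrightarrow> l2_on A a = l2_on A b"
  unfolding l2_on_def by (intro L2_set_cong) auto

lemma l2_on_uminus: "l2_on A (\<lambda>i. - a i) = l2_on A a"
  unfolding l2_on_def by simp

lemma l2_on_diff_commute: "l2_on A (\<lambda>i. a i - b i) = l2_on A (\<lambda>i. b i - a i)"
  unfolding l2_on_def by (simp add: norm_minus_commute)

lemma l2_on_add_le: "l2_on A (\<lambda>i. a i + b i) \<le> l2_on A a + l2_on A b"
proof -
  have "l2_on A (\<lambda>i. a i + b i) \<le> L2_set (\<lambda>i. cmod (a i) + cmod (b i)) A"
    unfolding l2_on_def by (intro L2_set_mono) (auto intro: norm_triangle_ineq)
  also have "\<dots> \<le> l2_on A a + l2_on A b"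
    unfolding l2_on_def by (rule L2_set_triangle_ineq)
  finally show ?thesis .
qed

lemma l2_on_diff_le: "l2_on A (\<lambda>i. a i - b i) \<le> l2_on A a + l2_on A b"
  using l2_on_add_le[of A a "\<lambda>i. - b i"] by (simp add: l2_on_uminus)

lemma vnorm_add_le: "vnorm N (\<lambda>n. a n + b n) \<le> vnorm N a + vnorm N b"
  unfolding vnorm_eq_l2_on by (rule l2_on_add_le)

lemma l2_on_power2: "(l2_on A a)\<^sup>2 = (\<Sum>i\<in>A. (cmod (a i))\<^sup>2)"
  unfolding l2_on_def L2_set_def by (simp add: sum_nonneg)

lemma sum_cnj_mult_self: "(\<Sum>i\<in>A. cnj (a i) * a i) = complex_of_real ((l2_on A a)\<^sup>2)"
  by (simp only: l2_on_power2 of_real_sum complex_norm_square mult.commute)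

lemma norm_sum_cnj_mult_le: "cmod (\<Sum>i\<in>A. cnj (a i) * b i) \<le> l2_on A a * l2_on A b"
proof -
  have "cmod (\<Sum>i\<in>A. cnj (a i) * b i) \<le> (\<Sum>i\<in>A. \<bar>cmod (a i)\<bar> * \<bar>cmod (b i)\<bar>)"
    by (rule order_trans[OF norm_sum]) (simp add: norm_mult)
  also have "\<dots> \<le> l2_on A a * l2_on A b"
    unfolding l2_on_def by (rule L2_set_mult_ineq)
  finally show ?thesis .
qed

lemma norm_inner_le_vnorm: "cmod (\<Sum>n<N. cnj (a n) * b n) \<le> vnorm N a * vnorm N b"
  unfolding vnorm_eq_l2_on by (rule norm_sum_cnj_mult_le)

lemma norm_le_l2_on: "finite A \<Longrightarrow> i \<in> A \<Longrightarrow> cmod (u i) \<le> l2_on A u"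
  unfolding l2_on_def by (rule member_le_L2_set) auto

lemma l2_on_eq_0_iff: "finite A \<Longrightarrow> l2_on A u = 0 \<longleftrightarrow> (\<forall>i\<in>A. u i = 0)"
  by (simp add: l2_on_def L2_set_eq_0_iff)

lemma summable_geometric_l2_on:
  assumes "finite A" "0 \<le> a" "a < 1" "\<And>k. l2_on A (b k) \<le> a ^ k * c"
    and "\<And>k i. i \<notin> A \<Longrightarrow> b k i = 0"
  shows "summable (\<lambda>k. b k i)"
proof (rule summable_comparison_test'[OF summable_mult[OF summable_geometric]])
  have "0 \<le> c"
    using order_trans[OF l2_on_nonneg assms(4)[of 0]] by simp
  show "norm (b k i) \<le> c * a ^ k" for k
    using assms(4)[of k] norm_le_l2_on[OF assms(1), of i "b k"] assms(5)[of i k] \<open>0 \<le> c\<close> assms(2)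
    by (cases "i \<in> A") (auto simp: mult.commute)
qed (use assms(2,3) in auto)

lemma l2norm_eq_l2_on:
  assumes "finite A" "\<And>i. i \<notin> A \<Longrightarrow> u i = 0"
  shows "l2norm u = l2_on A u"
  unfolding l2norm_def l2_on_def L2_set_def using assms by (subst suminf_finite[of A]) auto

lemma summable_weighted_compl:
  assumes "\<And>i. 0 \<le> w i" "summable (\<lambda>i. w i * cmod (z i))"
  shows "summable (\<lambda>i. w i * cmod (proj_compl \<Delta> z i))"
  by (rule summable_comparison_test[OF _ assms(2)]) (use assms(1) in auto)

lemma summable_weighted_diff:
  assumes "\<And>i. 0 \<le> w i" "summable (\<lambda>i. w i * cmod (a i))" "summable (\<lambda>i. w i * cmod (b i))"
  shows "summable (\<lambda>i. w i * cmod (a i - b i))"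
proof (rule summable_comparison_test[OF _ summable_add[OF assms(2,3)]])
  have "w i * cmod (a i - b i) \<le> w i * cmod (a i) + w i * cmod (b i)" for i
    using mult_left_mono[OF norm_triangle_ineq4 assms(1)] by (simp add: distrib_left)
  then show "\<exists>N. \<forall>i\<ge>N. norm (w i * cmod (a i - b i)) \<le> w i * cmod (a i) + w i * cmod (b i)"
    using assms(1) by auto
qed

lemma wnorm_nonneg: "(\<And>i. 0 \<le> w i) \<Longrightarrow> summable (\<lambda>i. w i * cmod (z i)) \<Longrightarrow> 0 \<le> wnorm w z"
  unfolding wnorm_def by (intro suminf_nonneg) auto

lemma wnorm_diff_le:
  assumes "\<And>i. 0 \<le> w i" "summable (\<lambda>i. w i * cmod (a i))" "summable (\<lambda>i. w i * cmod (b i))"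
  shows "wnorm w (\<lambda>i. a i - b i) \<le> wnorm w a + wnorm w b"
proof -
  have "wnorm w (\<lambda>i. a i - b i) \<le> (\<Sum>i. w i * cmod (a i) + w i * cmod (b i))"
    unfolding wnorm_def
    using summable_weighted_diff[OF assms] summable_add[OF assms(2,3)]
    by (rule suminf_le[rotated 1])
       (use mult_left_mono[OF norm_triangle_ineq4 assms(1)] in \<open>simp add: distrib_left\<close>)
  also have "\<dots> = wnorm w a + wnorm w b"
    unfolding wnorm_def by (rule suminf_add[OF assms(2,3), symmetric])
  finally show ?thesis .
qed

lemma sums_split_finite:
  fixes f :: "nat \<Rightarrow> real"
  assumes "finite A" "summable (\<lambda>i. if i \<in> A then 0 else f i)"
  shows "f sums ((\<Sum>i\<in>A. f i) + (\<Sum>i. if i \<in> A then 0 else f i))"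
proof -
  have "(\<lambda>i. if i \<in> A then f i else 0) sums (\<Sum>i\<in>A. f i)"
    using sums_finite[OF assms(1), of "\<lambda>i. if i \<in> A then f i else 0"] by simp
  from sums_add[OF this summable_sums[OF assms(2)]] show ?thesis
    by (simp add: if_distrib[of "\<lambda>a. a + _"] cong: if_cong)
qed

lemma wnorm_split:
  assumes "finite \<Delta>" "\<And>i. 0 \<le> w i" "summable (\<lambda>i. w i * cmod (z i))"
  shows "wnorm w z = (\<Sum>i\<in>\<Delta>. w i * cmod (z i)) + wnorm w (proj_compl \<Delta> z)"
proof -
  have compl: "(\<lambda>i. w i * cmod (proj_compl \<Delta> z i)) = (\<lambda>i. if i \<in> \<Delta> then 0 else w i * cmod (z i))"
    by auto
  show ?thesis
    using sums_split_finite[OF assms(1), of "\<lambda>i. w i * cmod (z i)"]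
      summable_weighted_compl[OF assms(2,3), of \<Delta>]
    unfolding wnorm_def compl by (simp add: sums_iff)
qed

lemma l2norm_le_l2_on_add_wnorm:
  assumes "finite \<Delta>" "\<And>i. 1 \<le> w i" "summable (\<lambda>i. w i * cmod (h i))"
  shows "l2norm h \<le> l2_on \<Delta> h + wnorm w (proj_compl \<Delta> h)"
proof -
  define T where "T = wnorm w (proj_compl \<Delta> h)"
  have w0: "0 \<le> w i" for i using assms(2) order_trans zero_le_one by blast
  have summ: "summable (\<lambda>i. w i * cmod (proj_compl \<Delta> h i))"
    by (rule summable_weighted_compl[OF w0 assms(3)])
  have term_le: "w i * cmod (proj_compl \<Delta> h i) \<le> T" for i
    unfolding T_def wnorm_def using sum_le_suminf[OF summ, of "{i}"] w0 by auto
  \<comment> \<open>Since w \<ge> 1, each term satisfies |u|^2 \<le> (w|u|)^2 \<le> T w|u|, so the tail has l2 norm at most T.\<close>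
  have sq_le: "(cmod (proj_compl \<Delta> h i))\<^sup>2 \<le> T * (w i * cmod (proj_compl \<Delta> h i))" for i
  proof -
    have "cmod (proj_compl \<Delta> h i) \<le> w i * cmod (proj_compl \<Delta> h i)"
      using assms(2)[of i] by (simp add: mult_le_cancel_right1)
    then have "(cmod (proj_compl \<Delta> h i))\<^sup>2 \<le> (w i * cmod (proj_compl \<Delta> h i))\<^sup>2"
      by (intro power_mono) auto
    also have "\<dots> \<le> T * (w i * cmod (proj_compl \<Delta> h i))"
      unfolding power2_eq_square using term_le[of i] w0[of i] by (intro mult_right_mono) auto
    finally show ?thesis .
  qed
  have summ2: "summable (\<lambda>i. (cmod (proj_compl \<Delta> h i))\<^sup>2)"
    by (rule summable_comparison_test[OF _ summable_mult[OF summ, of T]]) (use sq_le in auto)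
  have tail_le: "(\<Sum>i. (cmod (proj_compl \<Delta> h i))\<^sup>2) \<le> T\<^sup>2"
    using suminf_le[OF sq_le summ2 summable_mult[OF summ]]
    by (simp add: suminf_mult[OF summ] T_def wnorm_def power2_eq_square)
  have "(\<lambda>i. (cmod (h i))\<^sup>2) sums ((l2_on \<Delta> h)\<^sup>2 + (\<Sum>i. (cmod (proj_compl \<Delta> h i))\<^sup>2))"
    using sums_split_finite[OF assms(1), of "\<lambda>i. (cmod (h i))\<^sup>2"] summ2
    by (simp add: l2_on_power2 if_distrib[of "\<lambda>a. (cmod a)\<^sup>2"] cong: if_cong)
  then have "(\<Sum>i. (cmod (h i))\<^sup>2) \<le> (l2_on \<Delta> h + T)\<^sup>2"
    using tail_le mult_nonneg_nonneg[OF l2_on_nonneg[of \<Delta> h] wnorm_nonneg[OF w0 summ]]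
    by (simp add: sums_iff power2_sum T_def)
  then show ?thesis
    unfolding l2norm_def T_def
    using l2_on_nonneg[of \<Delta> h] wnorm_nonneg[OF w0 summ] real_sqrt_le_mono by fastforce
qed

lemma cnj_sgn_mult_self: "cnj (sgn z) * z = complex_of_real (cmod z)"
proof (cases "z = 0")
  case False
  have "cnj (sgn z) * z = cnj z * z / complex_of_real (cmod z)"
    by (simp add: sgn_div_norm scaleR_conv_of_real divide_inverse mult_ac)
  also have "\<dots> = complex_of_real (cmod z)"
    using False by (simp add: complex_norm_square[symmetric] mult.commute power2_eq_square)
  finally show ?thesis .
qed simp

lemma Re_sign_mult_diff_le:
  assumes "0 \<le> c"
  shows "Re (cnj (complex_of_real c * sgn a) * (b - a)) \<le> c * cmod b - c * cmod a"
proof -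
  let ?s = "cnj (complex_of_real c * sgn a)"
  have "Re (?s * b) \<le> cmod (?s * b)"
    by (rule complex_Re_le_cmod)
  also have "\<dots> \<le> c * cmod b"
    using assms by (simp add: norm_mult norm_sgn mult_right_le_one_le)
  moreover have "?s * a = complex_of_real (c * cmod a)"
    by (simp add: mult.assoc cnj_sgn_mult_self)
  then have "Re (?s * (b - a)) = Re (?s * b) - c * cmod a"
    by (simp only: right_diff_distrib minus_complex.sel Re_complex_of_real)
  ultimately show ?thesis
    by linarith
qed

lemma l2_on_sign_le:
  assumes "\<And>i. 0 \<le> w i"
  shows "l2_on \<Delta> (\<lambda>j. complex_of_real (w j) * sgn (x j)) \<le> sqrt (\<Sum>i\<in>\<Delta>. (w i)\<^sup>2)"
  unfolding l2_on_def L2_set_def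
  using assms by (intro real_sqrt_le_mono sum_mono power_mono) (auto simp: norm_mult norm_sgn)

lemma wnorm_compl_diff_le:
  assumes "finite \<Delta>" and w: "\<And>i. 0 \<le> w i"
    and x: "summable (\<lambda>i. w i * cmod (x i))" and xhat: "summable (\<lambda>i. w i * cmod (xhat i))"
    and xbar: "summable (\<lambda>i. w i * cmod (xbar i))"
    and min: "wnorm w xhat \<le> wnorm w xbar"
  shows "wnorm w (proj_compl \<Delta> (\<lambda>i. xhat i - x i))
           \<le> 2 * wnorm w (proj_compl \<Delta> x) + wnorm w (\<lambda>i. x i - xbar i)
             - Re (\<Sum>i\<in>\<Delta>. cnj (complex_of_real (w i) * sgn (x i)) * (xhat i - x i))"
proof -
  have "proj_compl \<Delta> (\<lambda>i. xhat i - x i) = (\<lambda>i. proj_compl \<Delta> xhat i - proj_compl \<Delta> x i)"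
    by auto
  then have "wnorm w (proj_compl \<Delta> (\<lambda>i. xhat i - x i)) \<le> wnorm w (proj_compl \<Delta> xhat) + wnorm w (proj_compl \<Delta> x)"
    using wnorm_diff_le[OF w summable_weighted_compl[OF w xhat] summable_weighted_compl[OF w x]]
    by simp
  moreover have "wnorm w xbar \<le> wnorm w x + wnorm w (\<lambda>i. x i - xbar i)"
    using wnorm_diff_le[OF w x summable_weighted_diff[OF w x xbar]] by simp
  moreover have "Re (\<Sum>i\<in>\<Delta>. cnj (complex_of_real (w i) * sgn (x i)) * (xhat i - x i))
                   \<le> (\<Sum>i\<in>\<Delta>. w i * cmod (xhat i)) - (\<Sum>i\<in>\<Delta>. w i * cmod (x i))"
    unfolding Re_sum sum_subtractf[symmetric] by (intro sum_mono Re_sign_mult_diff_le w)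
  ultimately show ?thesis
    using min wnorm_split[OF assms(1) w x] wnorm_split[OF assms(1) w xhat] by linarith
qed

lemma sums_adjoint_series:
  assumes "\<forall>n<N. (\<lambda>i. U n i * u i) sums p n"
  shows "(\<lambda>i. cnj (\<Sum>n<N. cnj (U n i) * b n) * u i) sums (\<Sum>n<N. cnj (b n) * p n)"
proof -
  have "(\<lambda>i. \<Sum>n<N. cnj (b n) * (U n i * u i)) sums (\<Sum>n<N. cnj (b n) * p n)"
    using assms by (intro sums_sum sums_mult) auto
  then show ?thesis
    by (simp add: sum_distrib_left sum_distrib_right mult_ac)
qed

lemma norm_sums_le_wnorm:
  assumes "(\<lambda>i. a i * u i) sums S" "\<And>i. u i \<noteq> 0 \<Longrightarrow> cmod (a i) \<le> c * w i"
    and "summable (\<lambda>i. w i * cmod (u i))"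
  shows "cmod S \<le> c * wnorm w u"
proof -
  have term_le: "cmod (a i * u i) \<le> c * (w i * cmod (u i))" for i
    using mult_right_mono[OF assms(2), of i "cmod (u i)"] by (cases "u i = 0") (auto simp: norm_mult)
  have summ: "summable (\<lambda>i. cmod (a i * u i))"
    by (rule summable_comparison_test[OF _ summable_mult[OF assms(3)]]) (use term_le in auto)
  have "cmod S \<le> (\<Sum>i. cmod (a i * u i))"
    using summable_norm[OF summ] assms(1) by (simp add: sums_iff)
  also have "\<dots> \<le> (\<Sum>i. c * (w i * cmod (u i)))"
    by (rule suminf_le[OF term_le summ summable_mult[OF assms(3)]])
  finally show ?thesis
    by (simp add: suminf_mult[OF assms(3)] wnorm_def)
qed

lemma summable_column_series:
  assumes "\<And>i. vnorm N (\<lambda>n. U n i) \<le> w i"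
    and "summable (\<lambda>i. w i * cmod (u i))" "n < N"
  shows "summable (\<lambda>i. U n i * u i)"
proof (rule summable_norm_cancel, rule summable_comparison_test[OF _ assms(2)])
  have "cmod (U n i) \<le> w i" for i
    using norm_le_l2_on[of "{..<N}" n "\<lambda>n. U n i"] assms(1)[of i] assms(3)
    by (simp add: vnorm_eq_l2_on)
  then show "\<exists>N. \<forall>i\<ge>N. norm (norm (U n i * u i)) \<le> w i * cmod (u i)"
    by (auto simp: norm_mult intro!: exI mult_right_mono)
qed

lemma vnorm_series_le_wnorm:
  assumes col: "\<And>i. vnorm N (\<lambda>n. U n i) \<le> w i"
    and "summable (\<lambda>i. w i * cmod (u i))" "\<forall>n<N. (\<lambda>i. U n i * u i) sums p n"
  shows "vnorm N p \<le> wnorm w u"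
proof -
  define \<xi> where "\<xi> i = (\<Sum>n<N. cnj (U n i) * p n)" for i
  have "(\<lambda>i. cnj (\<xi> i) * u i) sums (\<Sum>n<N. cnj (p n) * p n)"
    unfolding \<xi>_def by (rule sums_adjoint_series[OF assms(3)])
  moreover have "cmod (cnj (\<xi> i)) \<le> vnorm N p * w i" for i
  proof -
    have "cmod (cnj (\<xi> i)) \<le> vnorm N (\<lambda>n. U n i) * vnorm N p"
      unfolding complex_mod_cnj \<xi>_def by (rule norm_inner_le_vnorm)
    also have "\<dots> \<le> w i * vnorm N p"
      by (rule mult_right_mono[OF col vnorm_nonneg])
    finally show ?thesis by (simp add: mult.commute)
  qed
  ultimately have "cmod (\<Sum>n<N. cnj (p n) * p n) \<le> vnorm N p * wnorm w u"
    using assms(2) by (intro norm_sums_le_wnorm)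
  then have "vnorm N p * vnorm N p \<le> vnorm N p * wnorm w u"
    by (simp add: sum_cnj_mult_self vnorm_eq_l2_on power2_eq_square norm_mult)
  moreover have "0 \<le> wnorm w u"
    using order_trans[OF vnorm_nonneg col] assms(2) by (rule wnorm_nonneg)
  ultimately show ?thesis
    using vnorm_nonneg[of N p] by (cases "vnorm N p = 0") auto
qed

lemma UPD_eq_sums_diff:
  assumes "finite \<Delta>" "(\<lambda>i. U n i * h i) sums q" "(\<lambda>i. U n i * proj_compl \<Delta> h i) sums p"
  shows "UPD U \<Delta> h n = q - p"
proof -
  have "(\<lambda>i. U n i * h i - U n i * proj_compl \<Delta> h i) = (\<lambda>i. if i \<in> \<Delta> then U n i * h i else 0)"
    by auto
  then have "(\<lambda>i. if i \<in> \<Delta> then U n i * h i else 0) sums (q - p)"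
    using sums_diff[OF assms(2,3)] by simp
  moreover have "(\<lambda>i. if i \<in> \<Delta> then U n i * h i else 0) sums UPD U \<Delta> h n"
    using sums_finite[OF assms(1), of "\<lambda>i. if i \<in> \<Delta> then U n i * h i else 0"] by (simp add: UPD_def)
  ultimately show ?thesis
    by (simp add: sums_unique2)
qed

section \<open>Restricted near-isometries and the dual certificate\<close>

lemma UstarU_PD_eq_adjoint: "UstarU_PD U N \<Delta> v i = (\<Sum>n<N. cnj (U n i) * UPD U \<Delta> v n)"
  by (simp add: UstarU_PD_def UPD_def)

lemma Aop_eq_adjoint:
  "Aop U N \<Delta> v i = (if i \<in> \<Delta> then (\<Sum>n<N. cnj (U n i) * UPD U \<Delta> v n) else 0)"
  by (simp add: Aop_def UstarU_PD_eq_adjoint)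

lemma UPD_cong: "(\<And>j. j \<in> \<Delta> \<Longrightarrow> u j = v j) \<Longrightarrow> UPD U \<Delta> u = UPD U \<Delta> v"
  unfolding UPD_def by (intro ext sum.cong) auto

lemma Aop_diff: "Aop U N \<Delta> (\<lambda>j. a j - b j) i = Aop U N \<Delta> a i - Aop U N \<Delta> b i"
  by (simp add: Aop_def UstarU_PD_def sum_subtractf right_diff_distrib)

lemma Aop_as_matrix:
  "Aop U N \<Delta> v i = (if i \<in> \<Delta> then (\<Sum>j\<in>\<Delta>. (\<Sum>n<N. cnj (U n i) * U n j) * v j) else 0)"
  by (simp add: Aop_def UstarU_PD_def sum_distrib_left sum_distrib_right sum.swap[of _ \<Delta>] mult_ac)

lemma inner_UPD_eq:
  "(\<Sum>i\<in>\<Delta>. cnj (v i) * (\<Sum>n<N. cnj (U n i) * b n)) = (\<Sum>n<N. cnj (UPD U \<Delta> v n) * b n)"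
  by (simp add: UPD_def sum_distrib_left sum_distrib_right sum.swap[of _ \<Delta>] mult_ac)

lemma error_bound_arith:
  fixes C \<theta> \<sigma> \<epsilon> B H L T :: real
  assumes "0 \<le> C" "\<theta> < 1" "H \<le> L + T" "L \<le> C * (\<epsilon> + T)" "(1 - \<theta>) * T \<le> B + C * \<sigma> * \<epsilon>"
  shows "H \<le> C * (1 + (C + 1) / (1 - \<theta>) * \<sigma>) * \<epsilon> + (C + 1) / (1 - \<theta>) * B"
proof -
  have "T \<le> (B + C * \<sigma> * \<epsilon>) / (1 - \<theta>)"
    using assms(2,5) by (simp add: pos_le_divide_eq mult.commute)
  then have "(C + 1) * T \<le> (C + 1) * ((B + C * \<sigma> * \<epsilon>) / (1 - \<theta>))"
    using assms(1) by (intro mult_left_mono) auto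
  also have "\<dots> = (C + 1) / (1 - \<theta>) * B + C * ((C + 1) / (1 - \<theta>) * \<sigma>) * \<epsilon>"
    using assms(2) by (simp add: divide_simps) (simp add: algebra_simps)
  finally show ?thesis
    using assms(3,4) by (simp add: algebra_simps)
qed

locale near_isometry =
  fixes U :: "nat \<Rightarrow> nat \<Rightarrow> complex" and N :: nat and \<Delta> :: "nat set" and \<alpha> :: real
  assumes finite_\<Delta>: "finite \<Delta>" and \<alpha>_nonneg: "0 \<le> \<alpha>" and \<alpha>_less_1: "\<alpha> < 1"
    and near_identity: "\<forall>v. (\<forall>i. i \<notin> \<Delta> \<longrightarrow> v i = 0) \<longrightarrow>
                          l2norm (\<lambda>i. Aop U N \<Delta> v i - v i) \<le> \<alpha> * l2norm v"
begin

lemma l2_on_Aop_diff_le: "l2_on \<Delta> (\<lambda>i. Aop U N \<Delta> v i - v i) \<le> \<alpha> * l2_on \<Delta> v"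
proof -
  define v' where "v' i = (if i \<in> \<Delta> then v i else 0)" for i
  have "UPD U \<Delta> v' = UPD U \<Delta> v"
    by (rule UPD_cong) (simp add: v'_def)
  then have "Aop U N \<Delta> v' = Aop U N \<Delta> v"
    by (simp add: Aop_eq_adjoint fun_eq_iff)
  moreover have "l2_on \<Delta> v' = l2_on \<Delta> v" "l2_on \<Delta> (\<lambda>i. Aop U N \<Delta> v i - v' i) = l2_on \<Delta> (\<lambda>i. Aop U N \<Delta> v i - v i)"
    by (auto simp: v'_def intro: l2_on_cong)
  moreover have "l2norm (\<lambda>i. Aop U N \<Delta> v' i - v' i) = l2_on \<Delta> (\<lambda>i. Aop U N \<Delta> v' i - v' i)"
    "l2norm v' = l2_on \<Delta> v'"
    using finite_\<Delta> by (auto simp: v'_def Aop_def intro: l2norm_eq_l2_on)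
  ultimately show ?thesis
    using near_identity[rule_format, of v'] by (simp add: v'_def)
qed

lemma l2_on_Aop_le: "l2_on \<Delta> (Aop U N \<Delta> v) \<le> (1 + \<alpha>) * l2_on \<Delta> v"
  using l2_on_add_le[of \<Delta> "\<lambda>i. Aop U N \<Delta> v i - v i" v] l2_on_Aop_diff_le[of v]
  by (simp add: algebra_simps)

lemma l2_on_Aop_ge: "(1 - \<alpha>) * l2_on \<Delta> v \<le> l2_on \<Delta> (Aop U N \<Delta> v)"
  using l2_on_diff_le[of \<Delta> "Aop U N \<Delta> v" "\<lambda>i. Aop U N \<Delta> v i - v i"] l2_on_Aop_diff_le[of v]
  by (simp add: algebra_simps)

lemma C3_nonneg: "0 \<le> sqrt (1 + \<alpha>) / (1 - \<alpha>)"
  using \<alpha>_nonneg \<alpha>_less_1 by simp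

lemma vnorm_UPD_le: "vnorm N (UPD U \<Delta> v) \<le> sqrt (1 + \<alpha>) * l2_on \<Delta> v"
proof -
  have "complex_of_real ((vnorm N (UPD U \<Delta> v))\<^sup>2) = (\<Sum>n<N. cnj (UPD U \<Delta> v n) * UPD U \<Delta> v n)"
    by (simp only: vnorm_eq_l2_on sum_cnj_mult_self)
  also have "\<dots> = (\<Sum>i\<in>\<Delta>. cnj (v i) * (\<Sum>n<N. cnj (U n i) * UPD U \<Delta> v n))"
    by (simp only: inner_UPD_eq)
  also have "\<dots> = (\<Sum>i\<in>\<Delta>. cnj (v i) * Aop U N \<Delta> v i)"
    by (intro sum.cong) (auto simp: Aop_eq_adjoint)
  finally have "(vnorm N (UPD U \<Delta> v))\<^sup>2 = cmod (\<Sum>i\<in>\<Delta>. cnj (v i) * Aop U N \<Delta> v i)"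
    by (metis abs_power2 norm_of_real)
  also have "\<dots> \<le> l2_on \<Delta> v * l2_on \<Delta> (Aop U N \<Delta> v)"
    by (rule norm_sum_cnj_mult_le)
  also have "\<dots> \<le> l2_on \<Delta> v * ((1 + \<alpha>) * l2_on \<Delta> v)"
    by (rule mult_left_mono[OF l2_on_Aop_le l2_on_nonneg])
  also have "\<dots> = (sqrt (1 + \<alpha>) * l2_on \<Delta> v)\<^sup>2"
    using \<alpha>_nonneg by (simp add: power_mult_distrib power2_eq_square)
  finally show ?thesis
    by (rule power2_le_imp_le) (use \<alpha>_nonneg in \<open>simp add: l2_on_nonneg\<close>)
qed

lemma l2_on_adjoint_le: "l2_on \<Delta> (\<lambda>i. \<Sum>n<N. cnj (U n i) * q n) \<le> sqrt (1 + \<alpha>) * vnorm N q"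
proof -
  define z where "z = (\<lambda>i. \<Sum>n<N. cnj (U n i) * q n)"
  have "complex_of_real ((l2_on \<Delta> z)\<^sup>2) = (\<Sum>i\<in>\<Delta>. cnj (z i) * z i)"
    by (simp only: sum_cnj_mult_self)
  also have "\<dots> = (\<Sum>i\<in>\<Delta>. cnj (z i) * (\<Sum>n<N. cnj (U n i) * q n))"
    by (simp only: z_def)
  also have "\<dots> = (\<Sum>n<N. cnj (UPD U \<Delta> z n) * q n)"
    by (rule inner_UPD_eq)
  finally have eq: "complex_of_real ((l2_on \<Delta> z)\<^sup>2) = (\<Sum>n<N. cnj (UPD U \<Delta> z n) * q n)" .
  have "(l2_on \<Delta> z)\<^sup>2 = cmod (complex_of_real ((l2_on \<Delta> z)\<^sup>2))"
    by (simp del: of_real_power)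
  also have "\<dots> \<le> vnorm N (UPD U \<Delta> z) * vnorm N q"
    unfolding eq by (rule norm_inner_le_vnorm)
  also have "\<dots> \<le> (sqrt (1 + \<alpha>) * l2_on \<Delta> z) * vnorm N q"
    by (intro mult_right_mono vnorm_UPD_le vnorm_nonneg)
  finally have "l2_on \<Delta> z * l2_on \<Delta> z \<le> l2_on \<Delta> z * (sqrt (1 + \<alpha>) * vnorm N q)"
    by (simp add: power2_eq_square mult_ac)
  then show ?thesis
    using l2_on_nonneg[of \<Delta> z] vnorm_nonneg[of N q] \<alpha>_nonneg
    by (cases "l2_on \<Delta> z = 0") (auto simp: z_def)
qed

lemma l2_on_le_vnorm_UPD: "l2_on \<Delta> v \<le> sqrt (1 + \<alpha>) / (1 - \<alpha>) * vnorm N (UPD U \<Delta> v)"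
proof -
  have "(1 - \<alpha>) * l2_on \<Delta> v \<le> l2_on \<Delta> (Aop U N \<Delta> v)"
    by (rule l2_on_Aop_ge)
  also have "\<dots> = l2_on \<Delta> (\<lambda>i. \<Sum>n<N. cnj (U n i) * UPD U \<Delta> v n)"
    by (rule l2_on_cong) (simp add: Aop_eq_adjoint)
  also have "\<dots> \<le> sqrt (1 + \<alpha>) * vnorm N (UPD U \<Delta> v)"
    by (rule l2_on_adjoint_le)
  finally show ?thesis
    using \<alpha>_less_1 by (simp add: field_simps)
qed

lemma Aop_solvable: "\<exists>v. (\<forall>i. i \<notin> \<Delta> \<longrightarrow> v i = 0) \<and> (\<forall>i\<in>\<Delta>. Aop U N \<Delta> v i = g i)"
proof -
  \<comment> \<open>Neumann series: v = sum of the iterates of the residual map u \<mapsto> P_Delta (u - A u),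
    which contracts by the factor \<alpha>.\<close>
  define E where "E u i = (if i \<in> \<Delta> then u i - Aop U N \<Delta> u i else 0)" for u i
  define b where "b k = (E ^^ k) (\<lambda>i. if i \<in> \<Delta> then g i else 0)" for k
  have b_Suc: "b (Suc k) = E (b k)" for k
    by (simp add: b_def)
  have b_supp: "i \<notin> \<Delta> \<Longrightarrow> b k i = 0" for k i
    by (cases k) (auto simp: b_def E_def)
  have "l2_on \<Delta> (b (Suc k)) = l2_on \<Delta> (\<lambda>i. b k i - Aop U N \<Delta> (b k) i)" for k
    by (rule l2_on_cong) (simp add: b_Suc E_def)
  then have contract: "l2_on \<Delta> (b (Suc k)) \<le> \<alpha> * l2_on \<Delta> (b k)" for k
    by (metis l2_on_diff_commute l2_on_Aop_diff_le)
  have geometric: "l2_on \<Delta> (b k) \<le> \<alpha> ^ k * l2_on \<Delta> (b 0)" for k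
  proof (induction k)
    case (Suc k)
    then show ?case
      using order_trans[OF contract mult_left_mono[OF Suc \<alpha>_nonneg]] by simp
  qed simp
  have summ: "summable (\<lambda>k. b k i)" for i
    using finite_\<Delta> \<alpha>_nonneg \<alpha>_less_1 geometric b_supp by (rule summable_geometric_l2_on)
  define v where "v i = (\<Sum>k. b k i)" for i
  have "Aop U N \<Delta> v i = g i" if i: "i \<in> \<Delta>" for i
  proof -
    have "(\<lambda>k. Aop U N \<Delta> (b k) i) sums Aop U N \<Delta> v i"
      unfolding Aop_as_matrix using i
      by (simp, intro sums_sum sums_mult) (auto simp: v_def summable_sums summ)
    moreover have "Aop U N \<Delta> (b k) i = b k i - b (Suc k) i" for k
      using i by (simp add: b_Suc E_def)
    then have "(\<lambda>k. Aop U N \<Delta> (b k) i) sums (b 0 i)"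
      using telescope_sums'[OF summable_LIMSEQ_zero[OF summ[of i]]] by simp
    ultimately show ?thesis
      using i sums_unique2 by (fastforce simp: b_def)
  qed
  moreover have "\<forall>i. i \<notin> \<Delta> \<longrightarrow> v i = 0"
    by (simp add: v_def b_supp)
  ultimately show ?thesis
    by blast
qed

lemma Aop_inj_on_supported:
  assumes "\<forall>i. i \<notin> \<Delta> \<longrightarrow> v i = 0" "\<forall>i. i \<notin> \<Delta> \<longrightarrow> v' i = 0"
    and "\<forall>i\<in>\<Delta>. Aop U N \<Delta> v i = Aop U N \<Delta> v' i"
  shows "v = v'"
proof -
  define d where "d = (\<lambda>i. v i - v' i)"
  have "l2_on \<Delta> d = l2_on \<Delta> (\<lambda>i. d i - Aop U N \<Delta> d i)"
    using assms(3) by (intro l2_on_cong) (simp add: d_def Aop_diff)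
  then have "l2_on \<Delta> d \<le> \<alpha> * l2_on \<Delta> d"
    by (metis l2_on_diff_commute l2_on_Aop_diff_le)
  then have "(1 - \<alpha>) * l2_on \<Delta> d \<le> 0"
    by (simp add: algebra_simps)
  then have "l2_on \<Delta> d = 0"
    using l2_on_nonneg[of \<Delta> d] \<alpha>_less_1 by (simp add: mult_le_0_iff)
  then show ?thesis
    using assms(1,2) finite_\<Delta> by (auto simp: fun_eq_iff d_def l2_on_eq_0_iff)
qed

lemma Ainv_spec:
  "(\<forall>i. i \<notin> \<Delta> \<longrightarrow> Ainv U N \<Delta> g i = 0) \<and> (\<forall>i\<in>\<Delta>. Aop U N \<Delta> (Ainv U N \<Delta> g) i = g i)"
proof -
  obtain v where v: "(\<forall>i. i \<notin> \<Delta> \<longrightarrow> v i = 0) \<and> (\<forall>i\<in>\<Delta>. Aop U N \<Delta> v i = g i)"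
    using Aop_solvable by blast
  have "\<exists>!v. (\<forall>i. i \<notin> \<Delta> \<longrightarrow> v i = 0) \<and> (\<forall>i\<in>\<Delta>. Aop U N \<Delta> v i = g i)"
  proof (rule ex1I[of _ v])
    fix v' assume "(\<forall>i. i \<notin> \<Delta> \<longrightarrow> v' i = 0) \<and> (\<forall>i\<in>\<Delta>. Aop U N \<Delta> v' i = g i)"
    with v show "v' = v"
      by (intro Aop_inj_on_supported) auto
  qed (rule v)
  then show ?thesis
    unfolding Ainv_def by (rule theI')
qed

lemma vnorm_UPD_Ainv_le:
  "vnorm N (UPD U \<Delta> (Ainv U N \<Delta> g)) \<le> sqrt (1 + \<alpha>) / (1 - \<alpha>) * l2_on \<Delta> g"
proof -
  let ?v = "Ainv U N \<Delta> g"
  have "(1 - \<alpha>) * l2_on \<Delta> ?v \<le> l2_on \<Delta> g"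
    using l2_on_Aop_ge[of ?v] l2_on_cong[of \<Delta> "Aop U N \<Delta> ?v" g] Ainv_spec by simp
  then have "l2_on \<Delta> ?v \<le> l2_on \<Delta> g / (1 - \<alpha>)"
    using \<alpha>_less_1 by (simp add: field_simps)
  then have "sqrt (1 + \<alpha>) * l2_on \<Delta> ?v \<le> sqrt (1 + \<alpha>) * (l2_on \<Delta> g / (1 - \<alpha>))"
    using \<alpha>_nonneg by (intro mult_left_mono) auto
  then show ?thesis
    using vnorm_UPD_le[of ?v] by simp
qed

lemma l2_on_error_le:
  assumes col: "\<And>i. vnorm N (\<lambda>n. U n i) \<le> w i"
    and summ: "summable (\<lambda>i. w i * cmod (h i))"
    and res: "\<forall>n<N. (\<lambda>i. U n i * h i) sums q n" and tube: "vnorm N q \<le> \<epsilon>"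
  shows "l2_on \<Delta> h \<le> sqrt (1 + \<alpha>) / (1 - \<alpha>) * (\<epsilon> + wnorm w (proj_compl \<Delta> h))"
proof -
  define p where "p n = (\<Sum>i. U n i * proj_compl \<Delta> h i)" for n
  have summ_compl: "summable (\<lambda>i. w i * cmod (proj_compl \<Delta> h i))"
    using summable_weighted_compl[OF order_trans[OF vnorm_nonneg col] summ] .
  have p_sums: "\<forall>n<N. (\<lambda>i. U n i * proj_compl \<Delta> h i) sums p n"
    using summable_column_series[OF col summ_compl] by (simp add: p_def summable_sums)
  have "vnorm N (UPD U \<Delta> h) = vnorm N (\<lambda>n. q n - p n)"
    unfolding vnorm_eq_l2_on using res p_sums
    by (intro l2_on_cong) (simp add: UPD_eq_sums_diff[OF finite_\<Delta>])
  also have "\<dots> \<le> \<epsilon> + wnorm w (proj_compl \<Delta> h)"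
    using l2_on_diff_le[of "{..<N}" q p] tube vnorm_series_le_wnorm[OF col summ_compl p_sums]
    by (simp add: vnorm_eq_l2_on)
  finally show ?thesis
    using l2_on_le_vnorm_UPD[of h] mult_left_mono[OF _ C3_nonneg] by (blast intro: order_trans)
qed

lemma norm_sign_inner_le:
  assumes col: "\<And>i. vnorm N (\<lambda>n. U n i) \<le> w i"
    and summ: "summable (\<lambda>i. w i * cmod (h i))"
    and res: "\<forall>n<N. (\<lambda>i. U n i * h i) sums q n" and tube: "vnorm N q \<le> \<epsilon>"
    and cert: "\<forall>i. i \<notin> \<Delta> \<longrightarrow> cmod (UstarU_PD U N \<Delta> (Ainv U N \<Delta> g) i) \<le> \<theta> * w i"
  shows "cmod (\<Sum>i\<in>\<Delta>. cnj (g i) * h i)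
           \<le> sqrt (1 + \<alpha>) / (1 - \<alpha>) * l2_on \<Delta> g * \<epsilon> + \<theta> * wnorm w (proj_compl \<Delta> h)"
proof -
  \<comment> \<open>The full pairing of the certificate \<xi> with h is a pairing of b with U h, bounded through
    the tube; its part off Delta is at most \<theta> T, leaving the part on Delta, where \<xi> = g.\<close>
  define b where "b = UPD U \<Delta> (Ainv U N \<Delta> g)"
  define \<xi> where "\<xi> i = (\<Sum>n<N. cnj (U n i) * b n)" for i
  have \<xi>_on: "\<xi> i = g i" if "i \<in> \<Delta>" for i
    using Ainv_spec[of g] that by (simp add: \<xi>_def b_def Aop_eq_adjoint)
  have \<xi>_off: "cmod (\<xi> i) \<le> \<theta> * w i" if "i \<notin> \<Delta>" for i
    using cert that by (simp add: \<xi>_def b_def UstarU_PD_eq_adjoint)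
  have full: "(\<lambda>i. cnj (\<xi> i) * h i) sums (\<Sum>n<N. cnj (b n) * q n)"
    unfolding \<xi>_def by (rule sums_adjoint_series[OF res])
  have on: "(\<lambda>i. if i \<in> \<Delta> then cnj (\<xi> i) * h i else 0) sums (\<Sum>i\<in>\<Delta>. cnj (g i) * h i)"
    using sums_finite[OF finite_\<Delta>, of "\<lambda>i. if i \<in> \<Delta> then cnj (\<xi> i) * h i else 0"] by (simp add: \<xi>_on)
  have "(\<lambda>i. cnj (\<xi> i) * proj_compl \<Delta> h i) sums ((\<Sum>n<N. cnj (b n) * q n) - (\<Sum>i\<in>\<Delta>. cnj (g i) * h i))"
  proof -
    have "(\<lambda>i. cnj (\<xi> i) * h i - (if i \<in> \<Delta> then cnj (\<xi> i) * h i else 0))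
          = (\<lambda>i. cnj (\<xi> i) * proj_compl \<Delta> h i)"
      by auto
    then show ?thesis
      using sums_diff[OF full on] by simp
  qed
  then have off_le: "cmod ((\<Sum>n<N. cnj (b n) * q n) - (\<Sum>i\<in>\<Delta>. cnj (g i) * h i)) \<le> \<theta> * wnorm w (proj_compl \<Delta> h)"
    by (rule norm_sums_le_wnorm)
       (use \<xi>_off summable_weighted_compl[OF order_trans[OF vnorm_nonneg col] summ] in \<open>auto split: if_splits\<close>)
  have "cmod (\<Sum>n<N. cnj (b n) * q n) \<le> vnorm N b * vnorm N q"
    by (rule norm_inner_le_vnorm)
  also have "\<dots> \<le> sqrt (1 + \<alpha>) / (1 - \<alpha>) * l2_on \<Delta> g * \<epsilon>"
    using vnorm_UPD_Ainv_le[of g] tube mult_nonneg_nonneg[OF C3_nonneg l2_on_nonneg]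
    by (intro mult_mono) (auto simp: b_def vnorm_nonneg)
  finally show ?thesis
    using off_le norm_triangle_sub[of "\<Sum>i\<in>\<Delta>. cnj (g i) * h i" "\<Sum>n<N. cnj (b n) * q n"]
      norm_minus_commute[of "\<Sum>i\<in>\<Delta>. cnj (g i) * h i" "\<Sum>n<N. cnj (b n) * q n"]
    by linarith
qed

theorem recovery_error_le:
  fixes x xhat xbar :: "nat \<Rightarrow> complex" and w :: "nat \<Rightarrow> real"
  defines "g \<equiv> \<lambda>j. if j \<in> \<Delta> then complex_of_real (w j) * sgn (x j) else 0"
  assumes col: "\<And>i. vnorm N (\<lambda>n. U n i) \<le> w i" and w: "\<And>i. 1 \<le> w i"
    and x: "summable (\<lambda>i. w i * cmod (x i))" and xhat: "summable (\<lambda>i. w i * cmod (xhat i))"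
    and xbar: "summable (\<lambda>i. w i * cmod (xbar i))"
    and res: "\<forall>n<N. (\<lambda>i. U n i * (xhat i - x i)) sums q n" and tube: "vnorm N q \<le> \<epsilon>"
    and min: "wnorm w xhat \<le> wnorm w xbar"
    and \<theta>: "\<theta> < 1"
    and cert: "\<forall>i. i \<notin> \<Delta> \<longrightarrow> cmod (UstarU_PD U N \<Delta> (Ainv U N \<Delta> g) i) \<le> \<theta> * w i"
  shows "l2norm (\<lambda>i. xhat i - x i)
         \<le> sqrt (1 + \<alpha>) / (1 - \<alpha>) * (1 + (sqrt (1 + \<alpha>) / (1 - \<alpha>) + 1) / (1 - \<theta>)
              * sqrt (\<Sum>i\<in>\<Delta>. (w i)\<^sup>2)) * \<epsilon>
           + (sqrt (1 + \<alpha>) / (1 - \<alpha>) + 1) / (1 - \<theta>)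
             * (2 * wnorm w (proj_compl \<Delta> x) + wnorm w (\<lambda>i. x i - xbar i))"
proof -
  let ?C = "sqrt (1 + \<alpha>) / (1 - \<alpha>)"
  define h where "h = (\<lambda>i. xhat i - x i)"
  define T where "T = wnorm w (proj_compl \<Delta> h)"
  have w0: "0 \<le> w i" for i
    using w[of i] by simp
  have h: "summable (\<lambda>i. w i * cmod (h i))"
    unfolding h_def using w0 xhat x by (rule summable_weighted_diff)
  have res_h: "\<forall>n<N. (\<lambda>i. U n i * h i) sums q n"
    using res by (simp add: h_def)
  have "\<epsilon> \<ge> 0"
    using tube vnorm_nonneg order_trans by blast
  have g_on: "(\<Sum>i\<in>\<Delta>. cnj (g i) * h i) = (\<Sum>i\<in>\<Delta>. cnj (complex_of_real (w i) * sgn (x i)) * h i)"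
    by (simp add: g_def)
  have "- Re (\<Sum>i\<in>\<Delta>. cnj (g i) * h i) \<le> ?C * sqrt (\<Sum>i\<in>\<Delta>. (w i)\<^sup>2) * \<epsilon> + \<theta> * T"
  proof -
    have "l2_on \<Delta> g \<le> sqrt (\<Sum>i\<in>\<Delta>. (w i)\<^sup>2)"
      using l2_on_sign_le[OF w0, where \<Delta>=\<Delta> and x=x] l2_on_cong[of \<Delta> g] by (simp add: g_def)
    then have "?C * l2_on \<Delta> g * \<epsilon> \<le> ?C * sqrt (\<Sum>i\<in>\<Delta>. (w i)\<^sup>2) * \<epsilon>"
      using \<open>\<epsilon> \<ge> 0\<close> C3_nonneg by (intro mult_right_mono mult_left_mono) auto
    then show ?thesis
      using norm_sign_inner_le[OF col h res_h tube cert] abs_Re_le_cmod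
      unfolding T_def by (smt (verit))
  qed
  moreover have "T \<le> 2 * wnorm w (proj_compl \<Delta> x) + wnorm w (\<lambda>i. x i - xbar i)
                       - Re (\<Sum>i\<in>\<Delta>. cnj (g i) * h i)"
    using wnorm_compl_diff_le[OF finite_\<Delta> w0 x xhat xbar min]
    by (simp only: T_def h_def g_on[unfolded h_def])
  ultimately have "(1 - \<theta>) * T
               \<le> 2 * wnorm w (proj_compl \<Delta> x) + wnorm w (\<lambda>i. x i - xbar i) + ?C * sqrt (\<Sum>i\<in>\<Delta>. (w i)\<^sup>2) * \<epsilon>"
    by (simp add: left_diff_distrib)
  moreover have "l2norm h \<le> l2_on \<Delta> h + T"
    unfolding T_def using finite_\<Delta> w h by (rule l2norm_le_l2_on_add_wnorm)
  moreover have "l2_on \<Delta> h \<le> ?C * (\<epsilon> + T)"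
    unfolding T_def using col h res_h tube by (rule l2_on_error_le)
  ultimately show ?thesis
    unfolding h_def[symmetric]
    by (intro error_bound_arith[OF C3_nonneg \<theta>, where L = "l2_on \<Delta> h" and T = T]) auto
qed

end

section \<open>Voronoi quadrature and the sampling problem\<close>

lemma negligible_equidistant:
  fixes a b :: "'a::euclidean_space"
  assumes "a \<noteq> b"
  shows "negligible {s. norm (s - a) = norm (s - b)}"
proof -
  have "norm (s - a) = norm (s - b) \<longleftrightarrow> (norm (s - a))\<^sup>2 = (norm (s - b))\<^sup>2" for s
    by (metis norm_ge_zero power2_eq_imp_eq)
  also have "\<dots> s \<longleftrightarrow> (2 *\<^sub>R (b - a)) \<bullet> s = b \<bullet> b - a \<bullet> a" for s
    by (simp add: power2_norm_eq_inner algebra_simps inner_commute)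
  finally have "{s. norm (s - a) = norm (s - b)} = {s. (2 *\<^sub>R (b - a)) \<bullet> s = b \<bullet> b - a \<bullet> a}"
    by auto
  moreover have "negligible {s. (2 *\<^sub>R (b - a)) \<bullet> s = b \<bullet> b - a \<bullet> a}"
    using assms by (intro negligible_hyperplane) auto
  ultimately show ?thesis
    by simp
qed

lemma voronoi_lebesgue:
  fixes D :: "'a::euclidean_space set"
  assumes "open D"
  shows "voronoi D t N n \<in> sets lebesgue"
proof -
  have "voronoi D t N n = D \<inter> (\<Inter>m\<in>{m. m < N \<and> m \<noteq> n}. {s. norm (s - t n) \<le> norm (s - t m)})"
    by (auto simp: voronoi_def)
  moreover have "closed (\<Inter>m\<in>{m. m < N \<and> m \<noteq> n}. {s. norm (s - t n) \<le> norm (s - t m)})"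
    by (intro closed_INT ballI closed_Collect_le continuous_intros)
  ultimately show ?thesis
    using assms by (auto intro!: sets.Int borel_open borel_closed sets_completionI_sets simp: sets_lborel)
qed

lemma qweight_has_integral:
  fixes D :: "'a::euclidean_space set"
  assumes "open D" "\<forall>s\<in>D. \<nu> s \<ge> 0" "(\<nu> has_integral 1) D"
  shows "((\<lambda>s. if s \<in> voronoi D t N n then \<nu> s else 0) has_integral qweight D \<nu> t N n) D"
proof -
  have "\<nu> absolutely_integrable_on D"
    using assms(2,3) by (intro nonnegative_absolutely_integrable_1) auto
  then have "\<nu> integrable_on voronoi D t N n"
    using set_integrable_subset[OF _ voronoi_lebesgue[OF assms(1)]] set_lebesgue_integral_eq_integral(1)
    by (metis (no_types, lifting) mem_Collect_eq subsetI voronoi_def)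
  then show ?thesis
    unfolding qweight_def
    by (subst has_integral_restrict) (auto simp: voronoi_def intro: integrable_integral)
qed

lemma qweight_nonneg:
  fixes D :: "'a::euclidean_space set"
  assumes "open D" "\<forall>s\<in>D. \<nu> s \<ge> 0" "(\<nu> has_integral 1) D"
  shows "0 \<le> qweight D \<nu> t N n"
  using has_integral_nonneg[OF qweight_has_integral[OF assms]] assms(2) by auto

lemma sum_qweight_le_1:
  fixes D :: "'a::euclidean_space set"
  assumes "open D" "\<forall>s\<in>D. \<nu> s \<ge> 0" "(\<nu> has_integral 1) D" "inj_on t {..<N}"
  shows "(\<Sum>n<N. qweight D \<nu> t N n) \<le> 1"
proof -
  \<comment> \<open>Distinct cells meet only on bisector hyperplanes, so almost everywhere
    at most one cell indicator is nonzero.\<close>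
  define Z where "Z = (\<Union>n<N. \<Union>m\<in>{m. m < N \<and> m \<noteq> n}. {s. norm (s - t n) = norm (s - t m)})"
  have "negligible Z"
    unfolding Z_def using assms(4)
    by (auto intro!: negligible_Union negligible_equidistant simp: inj_on_def)
  define G where "G s = (\<Sum>n<N. if s \<in> voronoi D t N n then \<nu> s else 0)" for s
  have G_le: "G s \<le> \<nu> s" if "s \<in> D - Z" for s
  proof -
    let ?I = "{n\<in>{..<N}. s \<in> voronoi D t N n}"
    have "a = b" if "a \<in> ?I" "b \<in> ?I" for a b
    proof (rule ccontr)
      assume "a \<noteq> b"
      moreover have "norm (s - t a) = norm (s - t b)"
        using that \<open>a \<noteq> b\<close> by (auto simp: voronoi_def intro: antisym)
      ultimately have "s \<in> Z"
        using that by (auto simp: Z_def)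
      with \<open>s \<in> D - Z\<close> show False
        by simp
    qed
    then have "card ?I \<le> 1"
      by (simp add: card_le_Suc0_iff_eq)
    then have "real (card ?I) * \<nu> s \<le> 1 * \<nu> s"
      using assms(2) that by (intro mult_right_mono) auto
    moreover have "G s = real (card ?I) * \<nu> s"
      unfolding G_def by (simp add: sum.inter_filter[symmetric])
    ultimately show ?thesis
      by simp
  qed
  have "(G has_integral (\<Sum>n<N. qweight D \<nu> t N n)) D"
    unfolding G_def by (intro has_integral_sum qweight_has_integral[OF assms(1-3)]) auto
  then have "((\<lambda>s. if s \<in> Z then 0 else G s) has_integral (\<Sum>n<N. qweight D \<nu> t N n)) D"
    by (rule has_integral_spike[OF \<open>negligible Z\<close>, rotated]) auto
  then show ?thesis
    using G_le assms(2) by (intro has_integral_le[OF _ assms(3)]) auto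
qed

lemma weight_ge_1:
  fixes D :: "'a::euclidean_space set"
  assumes "\<forall>s\<in>D. \<nu> s \<ge> 0" "(\<nu> has_integral 1) D"
    and normalized: "((\<lambda>s. complex_of_real (\<nu> s) * \<phi> s * cnj (\<phi> s)) has_integral 1) D"
    and bound: "\<forall>s\<in>D. cmod (\<phi> s) \<le> c" and "0 < c"
  shows "1 \<le> c"
proof -
  have "((Re \<circ> (\<lambda>s. complex_of_real (\<nu> s) * \<phi> s * cnj (\<phi> s))) has_integral Re 1) D"
    by (rule has_integral_linear[OF normalized bounded_linear_Re])
  moreover have "Re (complex_of_real (\<nu> s) * \<phi> s * cnj (\<phi> s)) = \<nu> s * (cmod (\<phi> s))\<^sup>2" for s
  proof -
    have "complex_of_real (\<nu> s) * \<phi> s * cnj (\<phi> s) = complex_of_real (\<nu> s * (cmod (\<phi> s))\<^sup>2)"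
      by (simp only: of_real_mult complex_norm_square mult.assoc)
    then show ?thesis
      by (simp only: Re_complex_of_real)
  qed
  ultimately have "((\<lambda>s. \<nu> s * (cmod (\<phi> s))\<^sup>2) has_integral 1) D"
    by (simp add: comp_def)
  moreover have "((\<lambda>s. \<nu> s * c\<^sup>2) has_integral c\<^sup>2) D"
    using has_integral_mult_left[OF assms(2)] by simp
  moreover have "\<nu> s * (cmod (\<phi> s))\<^sup>2 \<le> \<nu> s * c\<^sup>2" if "s \<in> D" for s
    using assms(1) bound that by (intro mult_left_mono power_mono) auto
  ultimately have "1 \<le> c\<^sup>2"
    by (rule has_integral_le)
  then show ?thesis
    using \<open>0 < c\<close> power2_le_imp_le[of 1 c] by simp
qed

lemma vnorm_sqrt_weight_le:
  assumes "\<forall>n<N. 0 \<le> \<tau> n" "(\<Sum>n<N. \<tau> n) \<le> 1" "\<forall>n<N. cmod (z n) \<le> c" "0 \<le> c"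
  shows "vnorm N (\<lambda>n. complex_of_real (sqrt (\<tau> n)) * z n) \<le> c"
proof -
  have "(\<Sum>n<N. (cmod (complex_of_real (sqrt (\<tau> n)) * z n))\<^sup>2) = (\<Sum>n<N. \<tau> n * (cmod (z n))\<^sup>2)"
    using assms(1) by (intro sum.cong) (auto simp: norm_mult power_mult_distrib)
  also have "\<dots> \<le> (\<Sum>n<N. \<tau> n * c\<^sup>2)"
    using assms by (intro sum_mono mult_left_mono power_mono) auto
  also have "\<dots> \<le> c\<^sup>2"
    using mult_right_mono[OF assms(2), of "c\<^sup>2"] by (simp add: sum_distrib_right)
  finally show ?thesis
    unfolding vnorm_def using assms(4) real_sqrt_le_mono by fastforce
qed

lemma Umat_residual_sums:
  assumes "(\<lambda>i. x i * \<phi> i (t n)) sums f (t n)" "\<forall>i. i \<ge> K \<longrightarrow> xhat i = 0"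
  shows "(\<lambda>i. Umat \<tau> \<phi> t n i * (xhat i - x i))
           sums (UPK (Umat \<tau> \<phi> t) K xhat n - complex_of_real (sqrt (\<tau> n)) * f (t n))"
proof -
  have "(\<lambda>i. Umat \<tau> \<phi> t n i * xhat i) sums UPK (Umat \<tau> \<phi> t) K xhat n"
    unfolding UPK_def using assms(2) by (intro sums_finite) auto
  moreover have "(\<lambda>i. Umat \<tau> \<phi> t n i * x i) sums (complex_of_real (sqrt (\<tau> n)) * f (t n))"
    using sums_mult[OF assms(1), of "complex_of_real (sqrt (\<tau> n))"] by (simp add: Umat_def mult_ac)
  ultimately show ?thesis
    by (simp add: right_diff_distrib sums_diff)
qed

lemma wnorm_le_feasible:
  assumes min: "\<forall>z. (\<forall>i. i \<ge> K \<longrightarrow> z i = 0) \<longrightarrow> vnorm N (\<lambda>n. UPK U K z n - y n) \<le> \<eta>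
                  \<longrightarrow> wnorm w xhat \<le> wnorm w z"
    and feasible: "vnorm N (\<lambda>n. UPK U K z n - y n) \<le> \<eta>"
    and "\<And>i. 0 \<le> w i" "summable (\<lambda>i. w i * cmod (z i))"
  shows "wnorm w xhat \<le> wnorm w z"
proof -
  \<comment> \<open>U P_K only sees the first K coordinates, so truncating z keeps it feasible.\<close>
  have "wnorm w xhat \<le> wnorm w (\<lambda>i. if i < K then z i else 0)"
    using min feasible by (simp add: UPK_def)
  also have "\<dots> \<le> wnorm w z"
    unfolding wnorm_def using assms(3)
    by (intro suminf_le[OF _ summable_finite[of "{..<K}"] assms(4)]) auto
  finally show ?thesis .
qed

theorem lemma5p2:
  fixes D :: "'a::euclidean_space set"
    and \<nu> :: "'a \<Rightarrow> real"
    and \<phi> :: "nat \<Rightarrow> 'a \<Rightarrow> complex"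
    and t :: "nat \<Rightarrow> 'a"
    and N K :: nat
    and w :: "nat \<Rightarrow> real"
    and x xhat xbar e :: "nat \<Rightarrow> complex"
    and f :: "'a \<Rightarrow> complex"
    and \<eta> \<alpha> \<theta> :: real
    and \<Delta> :: "nat set"
  defines "\<tau> \<equiv> qweight D \<nu> t N"
  defines "U \<equiv> Umat \<tau> \<phi> t"
  defines "y \<equiv> (\<lambda>n. complex_of_real (sqrt (\<tau> n)) * (f (t n) + e n))"
  assumes D_domain: "open D" "connected D"
    and \<nu>_nonneg: "\<forall>s\<in>D. \<nu> s \<ge> 0"
    and \<nu>_int: "(\<nu> has_integral 1) D"
    and \<phi>_orthonormal: "\<forall>i j. ((\<lambda>s. complex_of_real (\<nu> s) * \<phi> i s * cnj (\<phi> j s))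
                               has_integral (if i = j then 1 else 0)) D"
    and t_in: "\<forall>n<N. t n \<in> closure D"
    and t_distinct: "inj_on t {..<N}"
    and w_pos: "\<forall>i. w i > 0"
    and w_sup: "\<forall>i. \<forall>s\<in>closure D. cmod (\<phi> i s) \<le> w i"
    and x_l1w: "in_l1w w x"
    and f_def: "\<forall>s\<in>closure D. (\<lambda>i. x i * \<phi> i s) sums f s"
    and noise: "\<forall>n<N. cmod (e n) \<le> \<eta>"
    and \<Delta>_sub: "\<Delta> \<subseteq> {..<K}"
    and \<alpha>: "0 \<le> \<alpha>" "\<alpha> < 1"
    and \<theta>: "0 \<le> \<theta>" "\<theta> < 1"
    and cond_a: "\<forall>v. (\<forall>i. i \<notin> \<Delta> \<longrightarrow> v i = 0) \<longrightarrow>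
                   l2norm (\<lambda>i. Aop U N \<Delta> v i - v i) \<le> \<alpha> * l2norm v"
    and cond_b: "\<forall>i. i \<notin> \<Delta> \<longrightarrow>
                   cmod (UstarU_PD U N \<Delta>
                      (Ainv U N \<Delta> (\<lambda>j. if j \<in> \<Delta> then complex_of_real (w j) * sgn (x j) else 0)) i)
                   / w i \<le> \<theta>"
    and xhat_supp: "\<forall>i. i \<ge> K \<longrightarrow> xhat i = 0"
    and xhat_feas: "vnorm N (\<lambda>n. UPK U K xhat n - y n) \<le> \<eta>"
    and xhat_min: "\<forall>z. (\<forall>i. i \<ge> K \<longrightarrow> z i = 0) \<longrightarrow> vnorm N (\<lambda>n. UPK U K z n - y n) \<le> \<eta>
                     \<longrightarrow> wnorm w xhat \<le> wnorm w z"
    and xbar_l1w: "in_l1w w xbar"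
    and xbar_feas: "vnorm N (\<lambda>n. UPK U K xbar n - y n) \<le> \<eta>"
  shows "l2norm (\<lambda>i. xhat i - x i)
         \<le> 2 * (sqrt (1 + \<alpha>) / (1 - \<alpha>))
             * (1 + (sqrt (1 + \<alpha>) / (1 - \<alpha>) + 1) / (1 - \<theta>) * sqrt (\<Sum>i\<in>\<Delta>. (w i)\<^sup>2)) * \<eta>
           + (sqrt (1 + \<alpha>) / (1 - \<alpha>) + 1) / (1 - \<theta>)
             * (2 * wnorm w (\<lambda>i. if i \<in> \<Delta> then 0 else x i) + wnorm w (\<lambda>i. x i - xbar i))"
proof -
  have w0: "\<And>i. 0 \<le> w i" and fin: "finite \<Delta>"
    using w_pos \<Delta>_sub finite_subset by (auto simp: less_imp_le)
  interpret near_isometry U N \<Delta> \<alpha>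
    using fin \<alpha> cond_a by unfold_locales
  have \<tau>: "\<forall>n<N. 0 \<le> \<tau> n" "(\<Sum>n<N. \<tau> n) \<le> 1"
    unfolding \<tau>_def using qweight_nonneg sum_qweight_le_1 \<nu>_nonneg \<nu>_int t_distinct D_domain by auto
  have w1: "1 \<le> w i" for i
  proof (rule weight_ge_1[OF \<nu>_nonneg \<nu>_int])
    show "((\<lambda>s. complex_of_real (\<nu> s) * \<phi> i s * cnj (\<phi> i s)) has_integral 1) D"
      using \<phi>_orthonormal[rule_format, of i i] by simp
    show "\<forall>s\<in>D. cmod (\<phi> i s) \<le> w i"
      using w_sup closure_subset by blast
  qed (use w_pos in simp)
  have col: "vnorm N (\<lambda>n. U n i) \<le> w i" for i
    unfolding U_def Umat_def using \<tau> w_sup t_in w0 by (intro vnorm_sqrt_weight_le) auto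
  define q where "q = (\<lambda>n. UPK U K xhat n - complex_of_real (sqrt (\<tau> n)) * f (t n))"
  have res: "\<forall>n<N. (\<lambda>i. U n i * (xhat i - x i)) sums q n"
    unfolding U_def q_def using f_def t_in xhat_supp by (auto intro: Umat_residual_sums)
  have q_split: "q = (\<lambda>n. (UPK U K xhat n - y n) + complex_of_real (sqrt (\<tau> n)) * e n)"
    by (auto simp: q_def y_def algebra_simps)
  have "0 \<le> \<eta>"
    using xhat_feas vnorm_nonneg order_trans by blast
  then have "vnorm N (\<lambda>n. complex_of_real (sqrt (\<tau> n)) * e n) \<le> \<eta>"
    using \<tau> noise by (intro vnorm_sqrt_weight_le) auto
  then have tube: "vnorm N q \<le> 2 * \<eta>"
    unfolding q_split
    using vnorm_add_le[of N "\<lambda>n. UPK U K xhat n - y n" "\<lambda>n. complex_of_real (sqrt (\<tau> n)) * e n"]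
      xhat_feas by linarith
  have min: "wnorm w xhat \<le> wnorm w xbar"
    using xhat_min xbar_feas w0 xbar_l1w by (intro wnorm_le_feasible) (auto simp: in_l1w_def)
  have cert: "\<forall>i. i \<notin> \<Delta> \<longrightarrow> cmod (UstarU_PD U N \<Delta> (Ainv U N \<Delta>
                 (\<lambda>j. if j \<in> \<Delta> then complex_of_real (w j) * sgn (x j) else 0)) i) \<le> \<theta> * w i"
    using cond_b w_pos by (auto simp: divide_le_eq mult.commute)
  have xhat_l1w: "summable (\<lambda>i. w i * cmod (xhat i))"
    by (rule summable_finite[of "{..<K}"]) (use xhat_supp in auto)
  from recovery_error_le[OF col w1 _ xhat_l1w _ res tube min \<theta>(2) cert] x_l1w xbar_l1w
  show ?thesis
    by (simp only: in_l1w_def ac_simps)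
qed

end
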